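(* Let $\mathcal{P}$ be a program and let $\mathcal{P}'$ be obtained from $\mathcal{P}$ by replacing a labelled instruction $\ell_1: r := x;\ \texttt{goto}\ \ell_2$ of a thread $t$ (where $x$ is a shared variable and $r$ a register of $t$) with $\ell_1: \texttt{havoc}(r,\phi(x,\vec r));\ \texttt{goto}\ \ell_2$, where $\phi$ is such that $\forall x, r.\ x = r \implies \phi(x,\vec r)$ is valid. Then $\mathcal{P} \preceq_{SC} \mathcal{P}'$ and $\mathcal{P} \preceq_{TSO} \mathcal{P}'$.
   Context: Programs. A program has a finite set of shared variables and a finite set of threads; each thread $t$ has registers $\vec r_t$, a start label, and a finite set of labelled instructions "$\ell: \mathit{inst};\ \texttt{goto}\ \ell'$", where $\mathit{inst}$ is one of: $x := e$ (write to a shared variable), $r := e$, $r := x$ (read of a shared variable), $\texttt{fence}$, $r := \texttt{cas}(x,e_1,e_2)$, $\texttt{skip}$, $\texttt{assume}\ b$, with $e,e_1,e_2,b$ expressions over the thread's registers; additionally a havoc instruction $\texttt{havoc}(r,\phi)$, where $\phi$ is a boolean expression over registers of the thread and a single shared variable $x$, assigns to $r$ any value $v$ such that $\phi$ holds when $r$ is interpreted as $v$, the other registers by their current values, and $x$ by its current value as seen by the thread (under TSO: the latest value for $x$ in the thread's store buffer if any, else the memory value). All variables and registers start at $0$. Semantics. Under TSO, each thread has a FIFO store buffer: a write $x:=e$ appends $(x,v)$ to the buffer, and buffered writes are nondeterministically flushed (oldest first) to memory; reads take the latest buffered value for the variable if any, else the memory value; $\texttt{fence}$ and $\texttt{cas}$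 require the thread's buffer to be empty; $\texttt{cas}(x,e_1,e_2)$ atomically sets $x$ to the value of $e_2$ and $r:=1$ if $x$ equals the value of $e_1$, else sets $r:=0$; $\texttt{assume}\ b$ blocks unless $b$ holds. Under SC there are no buffers: writes update memory immediately and reads read memory. Executions start from the initial state (and, under TSO, end with empty buffers). Abstraction. For $\mathbb{M}\in\{SC, TSO\}$, $\mathcal{P}\preceq_{\mathbb{M}}\mathcal{P}'$ means that every valuation of the shared variables reachable from the initial state in an $\mathbb{M}$ execution of $\mathcal{P}$ is also reachable in an $\mathbb{M}$ execution of $\mathcal{P}'$. *)

theory Defs
  imports Main
begin

text \<open>Register valuations of a thread and shared-memory valuations. Values are integers.
  Expressions over a thread's registers are represented semantically as functions of the
  register valuation.\<close>

type_synonym 'r regval = "'r \<Rightarrow> int"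
type_synonym 'x memval = "'x \<Rightarrow> int"

datatype ('x, 'r) inst =
    Write 'x "'r regval \<Rightarrow> int"
  | Assign 'r "'r regval \<Rightarrow> int"
  | Read 'r 'x
  | Fence
  | Cas 'r 'x "'r regval \<Rightarrow> int" "'r regval \<Rightarrow> int"
  | Skip
  | Assume "'r regval \<Rightarrow> bool"
  | Havoc 'r 'x "'r regval \<Rightarrow> int \<Rightarrow> bool"

text \<open>A program: a set of threads, a start label per thread, and per thread a set of
  labelled instructions (l, inst, l') meaning "l: inst; goto l'".\<close>

record ('t, 'l, 'x, 'r) program =
  threads :: "'t set"
  start :: "'t \<Rightarrow> 'l"
  code :: "'t \<Rightarrow> ('l \<times> ('x, 'r) inst \<times> 'l) set"

definition wf_program :: "('t, 'l, 'x, 'r) program \<Rightarrow> bool" where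
  "wf_program P \<longleftrightarrow> finite (threads P) \<and> (\<forall>t \<in> threads P. finite (code P t))"

inductive sc_inst :: "('x, 'r) inst \<Rightarrow> 'r regval \<Rightarrow> 'x memval \<Rightarrow> 'r regval \<Rightarrow> 'x memval \<Rightarrow> bool" where
  sc_write: "sc_inst (Write x e) \<rho> m \<rho> (m(x := e \<rho>))"
| sc_assign: "sc_inst (Assign r e) \<rho> m (\<rho>(r := e \<rho>)) m"
| sc_read: "sc_inst (Read r x) \<rho> m (\<rho>(r := m x)) m"
| sc_fence: "sc_inst Fence \<rho> m \<rho> m"
| sc_cas_succ: "m x = e1 \<rho> \<Longrightarrow> sc_inst (Cas r x e1 e2) \<rho> m (\<rho>(r := 1)) (m(x := e2 \<rho>))"
| sc_cas_fail: "m x \<noteq> e1 \<rho> \<Longrightarrow> sc_inst (Cas r x e1 e2) \<rho> m (\<rho>(r := 0)) m"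
| sc_skip: "sc_inst Skip \<rho> m \<rho> m"
| sc_assume: "b \<rho> \<Longrightarrow> sc_inst (Assume b) \<rho> m \<rho> m"
| sc_havoc: "\<phi> (\<rho>(r := v)) (m x) \<Longrightarrow> sc_inst (Havoc r x \<phi>) \<rho> m (\<rho>(r := v)) m"

type_synonym ('t, 'l, 'x, 'r) sc_config = "('t \<Rightarrow> 'l) \<times> ('t \<Rightarrow> 'r regval) \<times> 'x memval"

inductive sc_step :: "('t, 'l, 'x, 'r) program \<Rightarrow> ('t, 'l, 'x, 'r) sc_config \<Rightarrow> ('t, 'l, 'x, 'r) sc_config \<Rightarrow> bool"
  for P where
  "\<lbrakk> t \<in> threads P; (pc t, i, l') \<in> code P t; sc_inst i (regs t) m \<rho>' m' \<rbrakk>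
   \<Longrightarrow> sc_step P (pc, regs, m) (pc(t := l'), regs(t := \<rho>'), m')"

definition sc_reachable :: "('t, 'l, 'x, 'r) program \<Rightarrow> 'x memval set" where
  "sc_reachable P = {m. \<exists>pc regs. (sc_step P)\<^sup>*\<^sup>* (start P, \<lambda>_ _. 0, \<lambda>_. 0) (pc, regs, m)}"

definition view :: "'x memval \<Rightarrow> ('x \<times> int) list \<Rightarrow> 'x \<Rightarrow> int" where
  "view m b x = foldl (\<lambda>v (y, w). if y = x then w else v) (m x) b"

inductive tso_inst :: "('x, 'r) inst \<Rightarrow> 'r regval \<Rightarrow> 'x memval \<Rightarrow> ('x \<times> int) list
    \<Rightarrow> 'r regval \<Rightarrow> 'x memval \<Rightarrow> ('x \<times> int) list \<Rightarrow> bool" where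
  tso_write: "tso_inst (Write x e) \<rho> m b \<rho> m (b @ [(x, e \<rho>)])"
| tso_assign: "tso_inst (Assign r e) \<rho> m b (\<rho>(r := e \<rho>)) m b"
| tso_read: "tso_inst (Read r x) \<rho> m b (\<rho>(r := view m b x)) m b"
| tso_fence: "tso_inst Fence \<rho> m [] \<rho> m []"
| tso_cas_succ: "m x = e1 \<rho> \<Longrightarrow> tso_inst (Cas r x e1 e2) \<rho> m [] (\<rho>(r := 1)) (m(x := e2 \<rho>)) []"
| tso_cas_fail: "m x \<noteq> e1 \<rho> \<Longrightarrow> tso_inst (Cas r x e1 e2) \<rho> m [] (\<rho>(r := 0)) m []"
| tso_skip: "tso_inst Skip \<rho> m b \<rho> m b"
| tso_assume: "c \<rho> \<Longrightarrow> tso_inst (Assume c) \<rho> m b \<rho> m b"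
| tso_havoc: "\<phi> (\<rho>(r := v)) (view m b x) \<Longrightarrow> tso_inst (Havoc r x \<phi>) \<rho> m b (\<rho>(r := v)) m b"

type_synonym ('t, 'l, 'x, 'r) tso_config =
  "('t \<Rightarrow> 'l) \<times> ('t \<Rightarrow> 'r regval) \<times> 'x memval \<times> ('t \<Rightarrow> ('x \<times> int) list)"

inductive tso_step :: "('t, 'l, 'x, 'r) program \<Rightarrow> ('t, 'l, 'x, 'r) tso_config \<Rightarrow> ('t, 'l, 'x, 'r) tso_config \<Rightarrow> bool"
  for P where
  tso_exec: "\<lbrakk> t \<in> threads P; (pc t, i, l') \<in> code P t; tso_inst i (regs t) m (buf t) \<rho>' m' b' \<rbrakk>
   \<Longrightarrow> tso_step P (pc, regs, m, buf) (pc(t := l'), regs(t := \<rho>'), m', buf(t := b'))"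
| tso_flush: "\<lbrakk> t \<in> threads P; buf t = (x, v) # rest \<rbrakk>
   \<Longrightarrow> tso_step P (pc, regs, m, buf) (pc, regs, m(x := v), buf(t := rest))"

definition tso_reachable :: "('t, 'l, 'x, 'r) program \<Rightarrow> 'x memval set" where
  "tso_reachable P = {m. \<exists>pc regs. (tso_step P)\<^sup>*\<^sup>* (start P, \<lambda>_ _. 0, \<lambda>_. 0, \<lambda>_. [])
                                                    (pc, regs, m, \<lambda>_. [])}"

datatype memory_model = SC | TSO

definition reachable :: "memory_model \<Rightarrow> ('t, 'l, 'x, 'r) program \<Rightarrow> 'x memval set" where
  "reachable M P = (case M of SC \<Rightarrow> sc_reachable P | TSO \<Rightarrow> tso_reachable P)"

definition abstracts :: "memory_model \<Rightarrow> ('t, 'l, 'x, 'r) program \<Rightarrow> ('t, 'l, 'x, 'r) program \<Rightarrow> bool" where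
  "abstracts M P P' \<longleftrightarrow> reachable M P \<subseteq> reachable M P'"

end

theory Submission
  imports Defs
begin

text \<open>Every transition of the read \<open>r := x\<close> assigns to \<open>r\<close> exactly the value of \<open>x\<close> seen by
  the thread, and the havoc may choose that very value because \<open>\<phi>\<close> holds whenever \<open>r = x\<close>.
  So every step of \<open>P\<close> is literally a step of \<open>P'\<close>, under SC as well as under TSO, and every
  execution of \<open>P\<close> is an execution of \<open>P'\<close>.\<close>

definition sc_refines :: "('x, 'r) inst \<Rightarrow> ('x, 'r) inst \<Rightarrow> bool" where
  "sc_refines i i' \<longleftrightarrow> (\<forall>\<rho> m \<rho>' m'. sc_inst i \<rho> m \<rho>' m' \<longrightarrow> sc_inst i' \<rho> m \<rho>' m')"

definition tso_refines :: "('x, 'r) inst \<Rightarrow> ('x, 'r) inst \<Rightarrow> bool" where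
  "tso_refines i i' \<longleftrightarrow>
     (\<forall>\<rho> m b \<rho>' m' b'. tso_inst i \<rho> m b \<rho>' m' b' \<longrightarrow> tso_inst i' \<rho> m b \<rho>' m' b')"

definition code_refined_by ::
    "(('x, 'r) inst \<Rightarrow> ('x, 'r) inst \<Rightarrow> bool) \<Rightarrow> ('t, 'l, 'x, 'r) program \<Rightarrow> ('t, 'l, 'x, 'r) program \<Rightarrow> bool"
  where
  "code_refined_by R P P' \<longleftrightarrow>
     (\<forall>t \<in> threads P. \<forall>l i l'. (l, i, l') \<in> code P t \<longrightarrow> (\<exists>i'. (l, i', l') \<in> code P' t \<and> R i i'))"

lemma code_refined_by_mono:
  assumes "code_refined_by R P P'" and "\<And>i i'. R i i' \<Longrightarrow> S i i'"
  shows "code_refined_by S P P'"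
  using assms unfolding code_refined_by_def by blast

lemma sc_refines_Read_Havoc:
  assumes "\<forall>\<rho> v. v = \<rho> r \<longrightarrow> \<phi> \<rho> v"
  shows "sc_refines (Read r x) (Havoc r x \<phi>)"
  unfolding sc_refines_def
proof (intro allI impI)
  fix \<rho> m \<rho>' m'
  assume "sc_inst (Read r x) \<rho> m \<rho>' m'"
  then have "\<rho>' = \<rho>(r := m x)" and "m' = m" by (auto elim: sc_inst.cases)
  moreover have "\<phi> (\<rho>(r := m x)) (m x)" using assms by (metis fun_upd_same)
  ultimately show "sc_inst (Havoc r x \<phi>) \<rho> m \<rho>' m'" by (simp add: sc_havoc)
qed

lemma tso_refines_Read_Havoc:
  assumes "\<forall>\<rho> v. v = \<rho> r \<longrightarrow> \<phi> \<rho> v"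
  shows "tso_refines (Read r x) (Havoc r x \<phi>)"
  unfolding tso_refines_def
proof (intro allI impI)
  fix \<rho> m b \<rho>' m' b'
  assume "tso_inst (Read r x) \<rho> m b \<rho>' m' b'"
  then have "\<rho>' = \<rho>(r := view m b x)" and "m' = m" and "b' = b" by (auto elim: tso_inst.cases)
  moreover have "\<phi> (\<rho>(r := view m b x)) (view m b x)" using assms by (metis fun_upd_same)
  ultimately show "tso_inst (Havoc r x \<phi>) \<rho> m b \<rho>' m' b'" by (simp add: tso_havoc)
qed

lemma sc_step_refined:
  assumes "threads P' = threads P" and "code_refined_by sc_refines P P'"
    and "sc_step P c c'"
  shows "sc_step P' c c'"
  using assms(3)
proof cases
  case (1 t pc i l' regs m \<rho>' m')
  then obtain i' where "(pc t, i', l') \<in> code P' t" and "sc_inst i' (regs t) m \<rho>' m'"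
    using assms(2) unfolding code_refined_by_def sc_refines_def by blast
  then show ?thesis using 1 assms(1) by (auto intro: sc_step.intros)
qed

lemma tso_step_refined:
  assumes "threads P' = threads P" and "code_refined_by tso_refines P P'"
    and "tso_step P c c'"
  shows "tso_step P' c c'"
  using assms(3)
proof cases
  case (tso_exec t pc i l' regs m buf \<rho>' m' b')
  then obtain i' where "(pc t, i', l') \<in> code P' t" and "tso_inst i' (regs t) m (buf t) \<rho>' m' b'"
    using assms(2) unfolding code_refined_by_def tso_refines_def by blast
  then show ?thesis using tso_exec assms(1) by (auto intro: tso_step.tso_exec)
next
  case tso_flush
  then show ?thesis using assms(1) by (auto intro: tso_step.tso_flush)
qed

lemma sc_reachable_refined:
  assumes "threads P' = threads P" and "start P' = start P" and "code_refined_by sc_refines P P'"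
  shows "sc_reachable P \<subseteq> sc_reachable P'"
proof -
  have "(sc_step P)\<^sup>*\<^sup>* \<le> (sc_step P')\<^sup>*\<^sup>*"
    using sc_step_refined[OF assms(1,3)] by (intro rtranclp_mono) blast
  then show ?thesis unfolding sc_reachable_def assms(2) by blast
qed

lemma tso_reachable_refined:
  assumes "threads P' = threads P" and "start P' = start P" and "code_refined_by tso_refines P P'"
  shows "tso_reachable P \<subseteq> tso_reachable P'"
proof -
  have "(tso_step P)\<^sup>*\<^sup>* \<le> (tso_step P')\<^sup>*\<^sup>*"
    using tso_step_refined[OF assms(1,3)] by (intro rtranclp_mono) blast
  then show ?thesis unfolding tso_reachable_def assms(2) by blast
qed

theorem lemma3:
  fixes P P' :: "('t, 'l, 'x::finite, 'r::finite) program"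
    and t :: 't and l1 l2 :: 'l and r :: 'r and x :: 'x
    and \<phi> :: "'r regval \<Rightarrow> int \<Rightarrow> bool"
  assumes "wf_program P"
    and "t \<in> threads P"
    and "(l1, Read r x, l2) \<in> code P t"
    and "\<forall>\<rho> v. v = \<rho> r \<longrightarrow> \<phi> \<rho> v"
    and "P' = P\<lparr>code := (code P)(t := (code P t - {(l1, Read r x, l2)}) \<union> {(l1, Havoc r x \<phi>, l2)})\<rparr>"
  shows "abstracts SC P P' \<and> abstracts TSO P P'"
proof -
  define R where "R i i' \<longleftrightarrow> i' = i \<or> (i = Read r x \<and> i' = Havoc r x \<phi>)" for i i' :: "('x, 'r) inst"
  have same: "threads P' = threads P" "start P' = start P" using assms(5) by simp_all
  have refined: "code_refined_by R P P'"
    unfolding code_refined_by_def R_def using assms(5) by auto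
  have "code_refined_by sc_refines P P'"
  proof (rule code_refined_by_mono[OF refined])
    show "sc_refines i i'" if "R i i'" for i i'
      using that sc_refines_Read_Havoc[OF assms(4)] unfolding R_def
      by (elim disjE) (simp add: sc_refines_def, simp)
  qed
  moreover have "code_refined_by tso_refines P P'"
  proof (rule code_refined_by_mono[OF refined])
    show "tso_refines i i'" if "R i i'" for i i'
      using that tso_refines_Read_Havoc[OF assms(4)] unfolding R_def
      by (elim disjE) (simp add: tso_refines_def, simp)
  qed
  ultimately show ?thesis
    using sc_reachable_refined[OF same] tso_reachable_refined[OF same]
    unfolding abstracts_def reachable_def by simp
qed

end
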